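(* Let $\mathbf{A}$ be an algebra and $B,C$ subuniverses of $\mathbf{A}$. Suppose $B$ Jónsson absorbs $\mathbf{A}$ via a Jónsson absorption chain $d_0,\dots,d_k$ and $C$ Jónsson absorbs $\mathbf{A}$ via a Jónsson absorption chain $e_0,\dots,e_l$. Then there is a sequence of ternary terms $f_0,\dots,f_{kl+k}$ which is a Jónsson absorption chain both for $B$ and for $C$; explicitly, one may take $f_{a(l+1)+b}(x,y,z)=d_a(x,e_b(x,y,z),z)$ for $0\le a\le k$, $0\le b\le l$.
   Context: Jónsson absorption chain: for a subuniverse $B$ of $\mathbf{A}$, ternary terms $d_0,\dots,d_n$ of $\mathbf{A}$ such that $d_i(b,a,b')\in B$ for all $i$, all $b,b'\in B$, $a\in A$; $d_i(x,y,y)=d_{i+1}(x,x,y)$ for all $i<n$ and all $x,y\in A$; $d_0(x,y,z)=x$ and $d_n(x,y,z)=z$ for all $x,y,z\in A$. $B$ Jónsson absorbs $\mathbf{A}$ if such a chain exists. *)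

theory Defs
  imports Main
begin

datatype 'f trm = Var nat | Op 'f "'f trm list"

inductive is_term :: "('f \<Rightarrow> nat) \<Rightarrow> nat \<Rightarrow> 'f trm \<Rightarrow> bool" for ar n where
  var: "i < n \<Longrightarrow> is_term ar n (Var i)"
| op: "length ts = ar f \<Longrightarrow> (\<forall>t\<in>set ts. is_term ar n t) \<Longrightarrow> is_term ar n (Op f ts)"

primrec eval :: "('f \<Rightarrow> 'a list \<Rightarrow> 'a) \<Rightarrow> 'f trm \<Rightarrow> 'a list \<Rightarrow> 'a" where
  "eval ops (Var i) xs = xs ! i"
| "eval ops (Op f ts) xs = ops f (map (\<lambda>t. eval ops t xs) ts)"

definition algebra :: "'a set \<Rightarrow> ('f \<Rightarrow> nat) \<Rightarrow> ('f \<Rightarrow> 'a list \<Rightarrow> 'a) \<Rightarrow> bool" where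
  "algebra A ar ops \<longleftrightarrow>
     (\<forall>f xs. length xs = ar f \<and> set xs \<subseteq> A \<longrightarrow> ops f xs \<in> A)"

definition subuniverse :: "'a set \<Rightarrow> ('f \<Rightarrow> nat) \<Rightarrow> ('f \<Rightarrow> 'a list \<Rightarrow> 'a) \<Rightarrow> 'a set \<Rightarrow> bool" where
  "subuniverse A ar ops B \<longleftrightarrow> B \<subseteq> A \<and>
     (\<forall>f xs. length xs = ar f \<and> set xs \<subseteq> B \<longrightarrow> ops f xs \<in> B)"

definition jonsson_chain ::
  "'a set \<Rightarrow> ('f \<Rightarrow> nat) \<Rightarrow> ('f \<Rightarrow> 'a list \<Rightarrow> 'a) \<Rightarrow> 'a set \<Rightarrow> 'f trm list \<Rightarrow> bool" where
  "jonsson_chain A ar ops B ds \<longleftrightarrow>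
     ds \<noteq> [] \<and>
     (\<forall>d\<in>set ds. is_term ar 3 d) \<and>
     (\<forall>i < length ds. \<forall>b\<in>B. \<forall>b'\<in>B. \<forall>a\<in>A. eval ops (ds ! i) [b, a, b'] \<in> B) \<and>
     (\<forall>i. Suc i < length ds \<longrightarrow> (\<forall>x\<in>A. \<forall>y\<in>A.
          eval ops (ds ! i) [x, y, y] = eval ops (ds ! Suc i) [x, x, y])) \<and>
     (\<forall>x\<in>A. \<forall>y\<in>A. \<forall>z\<in>A. eval ops (ds ! 0) [x, y, z] = x) \<and>
     (\<forall>x\<in>A. \<forall>y\<in>A. \<forall>z\<in>A. eval ops (ds ! (length ds - 1)) [x, y, z] = z)"

end

theory Submission
  imports Defs
begin

text \<open>Composing the two chains lexicographically, $f_{a,b} = d_a(x, e_b(x,y,z), z)$, works because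
  consecutive terms with the same $a$ are linked by the linking identity of the $e$-chain
  ($e_b(x,y,y) = e_{b+1}(x,x,y)$), and the passage from $(a,l)$ to $(a+1,0)$ is the linking identity
  of the $d$-chain, since $e_l$ is the third projection and $e_0$ the first. Absorption into $B$
  is inherited from the outer terms $d_a$; absorption into $C$ holds because $e_b(c,y,c') \in C$
  and $C$, being a subuniverse, is closed under the term operation $d_a$.\<close>

primrec subst :: "'f trm list \<Rightarrow> 'f trm \<Rightarrow> 'f trm" where
  "subst s (Var i) = s ! i"
| "subst s (Op f ts) = Op f (map (subst s) ts)"

lemma eval_subst:
  assumes "is_term ar n t" "length s = n"
  shows "eval ops (subst s t) xs = eval ops t (map (\<lambda>u. eval ops u xs) s)"
  using assms
proof (induction rule: is_term.induct)
  case (var i)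
  then show ?case by simp
next
  case (op ts f)
  then show ?case by (auto simp: comp_def intro!: arg_cong[where f = "ops f"])
qed

lemma is_term_subst:
  assumes "is_term ar n t" "length s = n" "\<forall>u\<in>set s. is_term ar m u"
  shows "is_term ar m (subst s t)"
  using assms
proof (induction rule: is_term.induct)
  case (var i)
  then show ?case by simp
next
  case (op ts f)
  then show ?case by (auto intro!: is_term.op)
qed

lemma eval_closed:
  assumes "is_term ar n t" "length xs = n" "set xs \<subseteq> B"
    and closed: "\<forall>f xs. length xs = ar f \<and> set xs \<subseteq> B \<longrightarrow> ops f xs \<in> B"
  shows "eval ops t xs \<in> B"
  using assms(1-3)
proof (induction rule: is_term.induct)
  case (var i)
  then show ?case by auto
next
  case (op ts f)
  then have "set (map (\<lambda>t. eval ops t xs) ts) \<subseteq> B" by auto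
  with op show ?case using closed by simp
qed

definition compose_middle :: "'f trm \<Rightarrow> 'f trm \<Rightarrow> 'f trm" where
  "compose_middle d e = subst [Var 0, e, Var 2] d"

lemma eval_compose_middle:
  "is_term ar 3 d \<Longrightarrow>
     eval ops (compose_middle d e) [x, y, z] = eval ops d [x, eval ops e [x, y, z], z]"
  unfolding compose_middle_def by (simp add: eval_subst)

lemma is_term_compose_middle:
  "is_term ar 3 d \<Longrightarrow> is_term ar 3 e \<Longrightarrow> is_term ar 3 (compose_middle d e)"
  unfolding compose_middle_def by (rule is_term_subst[of ar 3 d]) (auto intro: is_term.var)

definition jonsson_product :: "'f trm list \<Rightarrow> 'f trm list \<Rightarrow> 'f trm list" where
  "jonsson_product ds es = map (\<lambda>(d, e). compose_middle d e) (List.product ds es)"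

lemma length_jonsson_product [simp]:
  "length (jonsson_product ds es) = length ds * length es"
  by (simp add: jonsson_product_def)

lemma nth_jonsson_product:
  "i < length ds * length es \<Longrightarrow>
     jonsson_product ds es ! i = compose_middle (ds ! (i div length es)) (es ! (i mod length es))"
  by (simp add: jonsson_product_def product_nth)

lemma nth_jonsson_product_pair:
  assumes "a < length ds" "b < length es"
  shows "jonsson_product ds es ! (a * length es + b) = compose_middle (ds ! a) (es ! b)"
proof -
  have "a * length es + b < Suc a * length es" using assms(2) by simp
  also have "\<dots> \<le> length ds * length es" using assms(1) by (intro mult_le_mono1) simp
  moreover have "(a * length es + b) div length es = a" "(a * length es + b) mod length es = b"
    using assms(2) by (auto simp: div_add1_eq)
  ultimately show ?thesis by (simp add: nth_jonsson_product)
qed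

lemma jonsson_chain_is_term:
  "jonsson_chain A ar ops B ds \<Longrightarrow> i < length ds \<Longrightarrow> is_term ar 3 (ds ! i)"
  unfolding jonsson_chain_def by auto

lemma jonsson_chain_eval_closed:
  assumes "algebra A ar ops" "jonsson_chain A ar ops B ds" "i < length ds"
    and "x \<in> A" "y \<in> A" "z \<in> A"
  shows "eval ops (ds ! i) [x, y, z] \<in> A"
  using assms by (intro eval_closed[OF jonsson_chain_is_term]) (auto simp: algebra_def)

lemma eval_nth_jonsson_product:
  assumes "jonsson_chain A ar ops B ds" "i < length ds * length es"
  shows "eval ops (jonsson_product ds es ! i) [x, y, z]
           = eval ops (ds ! (i div length es)) [x, eval ops (es ! (i mod length es)) [x, y, z], z]"
proof -
  have "i div length es < length ds"
    using assms(2) by (simp add: less_mult_imp_div_less)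
  then have "is_term ar 3 (ds ! (i div length es))"
    by (rule jonsson_chain_is_term[OF assms(1)])
  then show ?thesis
    using assms(2) by (simp add: nth_jonsson_product eval_compose_middle)
qed

lemma jonsson_product_link:
  assumes ds: "jonsson_chain A ar ops B ds" and es: "jonsson_chain A ar ops C es"
    and i: "Suc i < length ds * length es" and "x \<in> A" "y \<in> A"
  shows "eval ops (jonsson_product ds es ! i) [x, y, y]
           = eval ops (jonsson_product ds es ! Suc i) [x, x, y]"
proof -
  let ?n = "length es"
  let ?a = "i div ?n" and ?b = "i mod ?n"
  have n: "?n > 0" using es by (simp add: jonsson_chain_def)
  show ?thesis
  proof (cases "Suc ?b < ?n")
    case True
    then have "Suc i div ?n = ?a" "Suc i mod ?n = Suc ?b"
      by (simp_all add: div_Suc mod_Suc)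
    moreover have "eval ops (es ! ?b) [x, y, y] = eval ops (es ! Suc ?b) [x, x, y]"
      using es True \<open>x \<in> A\<close> \<open>y \<in> A\<close> by (simp add: jonsson_chain_def)
    ultimately show ?thesis
      using ds i by (simp add: eval_nth_jonsson_product)
  next
    case False
    then have last: "?b = ?n - 1" using n mod_less_divisor[OF n, of i] by linarith
    then have next_index: "Suc i div ?n = Suc ?a" "Suc i mod ?n = 0"
      using n by (simp_all add: div_Suc mod_Suc)
    have "Suc ?a < length ds"
      using i next_index(1) by (metis less_mult_imp_div_less)
    then have "eval ops (ds ! ?a) [x, y, y] = eval ops (ds ! Suc ?a) [x, x, y]"
      using ds \<open>x \<in> A\<close> \<open>y \<in> A\<close> by (simp add: jonsson_chain_def)
    moreover have "eval ops (es ! ?b) [x, y, y] = y" "eval ops (es ! 0) [x, x, y] = x"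
      using es last \<open>x \<in> A\<close> \<open>y \<in> A\<close> by (simp_all add: jonsson_chain_def)
    ultimately show ?thesis
      using ds i next_index by (simp add: eval_nth_jonsson_product)
  qed
qed

lemma jonsson_chain_product:
  assumes alg: "algebra A ar ops"
    and ds: "jonsson_chain A ar ops B ds" and es: "jonsson_chain A ar ops C es"
    and absorbs: "\<And>a b x y z. a < length ds \<Longrightarrow> b < length es \<Longrightarrow> x \<in> D \<Longrightarrow> y \<in> A \<Longrightarrow> z \<in> D
                    \<Longrightarrow> eval ops (ds ! a) [x, eval ops (es ! b) [x, y, z], z] \<in> D"
  shows "jonsson_chain A ar ops D (jonsson_product ds es)"
  unfolding jonsson_chain_def
proof (intro conjI ballI allI impI)
  have "0 < length ds * length es"
    using ds es by (simp add: jonsson_chain_def)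
  then show "jonsson_product ds es \<noteq> []"
    by (metis length_jonsson_product length_greater_0_conv)
next
  fix f assume "f \<in> set (jonsson_product ds es)"
  then show "is_term ar 3 f"
    using ds es by (auto simp: jonsson_product_def jonsson_chain_def intro: is_term_compose_middle)
next
  fix i x y z
  assume i: "i < length (jonsson_product ds es)" and "x \<in> D" "z \<in> D" "y \<in> A"
  have "i div length es < length ds" "i mod length es < length es"
    using i es by (simp_all add: less_mult_imp_div_less jonsson_chain_def)
  then show "eval ops (jonsson_product ds es ! i) [x, y, z] \<in> D"
    using i ds absorbs \<open>x \<in> D\<close> \<open>y \<in> A\<close> \<open>z \<in> D\<close>
    by (simp add: eval_nth_jonsson_product)
next
  fix i x y
  assume "Suc i < length (jonsson_product ds es)" "x \<in> A" "y \<in> A"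
  then show "eval ops (jonsson_product ds es ! i) [x, y, y]
               = eval ops (jonsson_product ds es ! Suc i) [x, x, y]"
    using jonsson_product_link[OF ds es] by simp
next
  fix x y z assume xyz: "x \<in> A" "y \<in> A" "z \<in> A"
  have pos: "0 < length ds * length es" using ds es by (simp add: jonsson_chain_def)
  have "eval ops (es ! 0) [x, y, z] \<in> A"
    using jonsson_chain_eval_closed[OF alg es] es xyz by (simp add: jonsson_chain_def)
  then show "eval ops (jonsson_product ds es ! 0) [x, y, z] = x"
    using ds xyz eval_nth_jonsson_product[OF ds pos] by (simp add: jonsson_chain_def)
next
  fix x y z assume xyz: "x \<in> A" "y \<in> A" "z \<in> A"
  let ?m = "length ds" and ?n = "length es"
  have pos: "?m > 0" "?n > 0" using ds es by (simp_all add: jonsson_chain_def)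
  then have last: "length (jonsson_product ds es) - 1 = (?m - 1) * ?n + (?n - 1)"
    by (cases ?m; cases ?n) (auto simp: algebra_simps)
  have nth_last: "jonsson_product ds es ! (length (jonsson_product ds es) - 1)
                    = compose_middle (ds ! (?m - 1)) (es ! (?n - 1))"
    unfolding last by (rule nth_jonsson_product_pair) (use pos in auto)
  have "is_term ar 3 (ds ! (?m - 1))"
    using ds pos by (simp add: jonsson_chain_is_term)
  then have "eval ops (jonsson_product ds es ! (length (jonsson_product ds es) - 1)) [x, y, z]
               = eval ops (ds ! (?m - 1)) [x, eval ops (es ! (?n - 1)) [x, y, z], z]"
    unfolding nth_last by (rule eval_compose_middle)
  also have "\<dots> = z"
    using ds es xyz by (simp add: jonsson_chain_def)
  finally show "eval ops (jonsson_product ds es ! (length (jonsson_product ds es) - 1)) [x, y, z] = z" .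
qed

lemma jonsson_chain_product_outer:
  assumes alg: "algebra A ar ops" and "B \<subseteq> A"
    and ds: "jonsson_chain A ar ops B ds" and es: "jonsson_chain A ar ops C es"
  shows "jonsson_chain A ar ops B (jonsson_product ds es)"
proof (rule jonsson_chain_product[OF alg ds es])
  fix a b x y z
  assume a: "a < length ds" and b: "b < length es" and xyz: "x \<in> B" "y \<in> A" "z \<in> B"
  then have "eval ops (es ! b) [x, y, z] \<in> A"
    using \<open>B \<subseteq> A\<close> by (blast intro: jonsson_chain_eval_closed[OF alg es])
  then show "eval ops (ds ! a) [x, eval ops (es ! b) [x, y, z], z] \<in> B"
    using ds a xyz by (simp add: jonsson_chain_def)
qed

lemma jonsson_chain_product_inner:
  assumes alg: "algebra A ar ops" and C: "subuniverse A ar ops C"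
    and ds: "jonsson_chain A ar ops B ds" and es: "jonsson_chain A ar ops C es"
  shows "jonsson_chain A ar ops C (jonsson_product ds es)"
proof (rule jonsson_chain_product[OF alg ds es])
  fix a b x y z
  assume a: "a < length ds" and b: "b < length es" and xyz: "x \<in> C" "y \<in> A" "z \<in> C"
  then have "eval ops (es ! b) [x, y, z] \<in> C"
    using es by (simp add: jonsson_chain_def)
  with a xyz show "eval ops (ds ! a) [x, eval ops (es ! b) [x, y, z], z] \<in> C"
    using C by (intro eval_closed[OF jonsson_chain_is_term[OF ds]]) (auto simp: subuniverse_def)
qed

theorem lemma2p3:
  fixes A B C :: "'a set" and ar :: "'f \<Rightarrow> nat" and ops :: "'f \<Rightarrow> 'a list \<Rightarrow> 'a"
    and ds es :: "'f trm list" and k l :: nat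
  assumes "algebra A ar ops"
    and "subuniverse A ar ops B" and "subuniverse A ar ops C"
    and "length ds = Suc k" and "jonsson_chain A ar ops B ds"
    and "length es = Suc l" and "jonsson_chain A ar ops C es"
  shows "\<exists>fs. length fs = Suc k * Suc l
           \<and> jonsson_chain A ar ops B fs \<and> jonsson_chain A ar ops C fs
           \<and> (\<forall>a\<le>k. \<forall>b\<le>l. \<forall>x\<in>A. \<forall>y\<in>A. \<forall>z\<in>A.
                eval ops (fs ! (a * Suc l + b)) [x, y, z]
                  = eval ops (ds ! a) [x, eval ops (es ! b) [x, y, z], z])"
proof (intro exI conjI allI impI ballI)
  let ?fs = "jonsson_product ds es"
  show "length ?fs = Suc k * Suc l" using assms by simp
  show "jonsson_chain A ar ops B ?fs"
    using assms by (intro jonsson_chain_product_outer) (auto simp: subuniverse_def)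
  show "jonsson_chain A ar ops C ?fs"
    using assms by (intro jonsson_chain_product_inner)
  fix a b x y z assume "a \<le> k" "b \<le> l"
  then show "eval ops (?fs ! (a * Suc l + b)) [x, y, z]
               = eval ops (ds ! a) [x, eval ops (es ! b) [x, y, z], z]"
    using assms nth_jonsson_product_pair[of a ds b es]
      eval_compose_middle[OF jonsson_chain_is_term[OF assms(5)]]
    by (simp add: less_Suc_eq_le)
qed

end
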